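(* Let $Q_\infty=(q_0,q_1,q_2,\dots)$ be any infinite stochastic vector with positive coordinates, fix a GLS-expansion with cylinder lengths given by $Q_\infty$, and let $V=\{i_1,i_2,\dots,i_k,i_{k+1},\dots\}\subset\mathbb{N}_0$. Then \[\dim_H\bigl(C[\mathit{GLS},V]\bigr)=\sup\Bigl\{x:\ \sum_{i\in V} q_i^x\ge 1\Bigr\}.\]
   Context: GLS-expansion: Let $Q_\infty=(q_0,q_1,\dots)$ be a stochastic vector with positive coordinates ($q_i>0$, $\sum_{i\ge 0} q_i=1$). Choose closed intervals $\Delta_i=[a_i,b_i]\subset[0,1]$, $i\in\mathbb{N}_0$, with pairwise disjoint interiors and $|\Delta_i|=q_i$ (cylinders of rank 1). Let $f_i:[0,1]\to\Delta_i$ be the increasing affine bijection. The cylinders of rank $n$ are $\Delta_{i_1i_2\dots i_n}=f_{i_1}\circ\dots\circ f_{i_n}([0,1])$, so the placement of $\Delta_{i_1\dots i_n}$ inside $\Delta_{i_1\dots i_{n-1}}$ is the same as that of $\Delta_{i_n}$ inside $[0,1]$ and $|\Delta_{i_1\dots i_n}|=q_{i_1}\cdots q_{i_n}$. For any sequence $(i_k)$ in $\mathbb{N}_0$, $\bigcap_k \Delta_{i_1\dots i_k}$ is a single point, denoted $\Delta^{\mathit{GLS}}_{i_1i_2\dots}$. For $V\subset\mathbb{N}_0$, $C[\mathit{GLS},V]=\{\Delta^{\mathit{GLS}}_{\alpha_1\alpha_2\dots}:\ \alpha_k\in V \text{ for all } k\}$. In the supremum, $x$ ranges over real numbers and the series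 $\sum_{i\in V}q_i^x$ is allowed to take the value $+\infty$. *)

theory Defs
  imports "HOL-Analysis.Analysis"
begin

definition hausdorff_pre :: "real \<Rightarrow> real \<Rightarrow> real set \<Rightarrow> ennreal" where
  "hausdorff_pre s \<delta> A =
     (INF U \<in> {U :: nat \<Rightarrow> real set. A \<subseteq> (\<Union>n. U n) \<and>
                   (\<forall>n. bounded (U n) \<and> diameter (U n) \<le> \<delta>)}.
        (\<Sum>n. ennreal (diameter (U n) powr s)))"

definition hausdorff_measure :: "real \<Rightarrow> real set \<Rightarrow> ennreal" where
  "hausdorff_measure s A = (SUP \<delta> \<in> {0<..}. hausdorff_pre s \<delta> A)"

definition hausdorff_dim :: "real set \<Rightarrow> ereal" where
  "hausdorff_dim A = (INF s \<in> {s. 0 \<le> s \<and> hausdorff_measure s A = 0}. ereal s)"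

definition gls_map :: "(nat \<Rightarrow> real) \<Rightarrow> (nat \<Rightarrow> real) \<Rightarrow> nat \<Rightarrow> real \<Rightarrow> real" where
  "gls_map q a i x = a i + q i * x"

definition gls_cylinder :: "(nat \<Rightarrow> real) \<Rightarrow> (nat \<Rightarrow> real) \<Rightarrow> nat list \<Rightarrow> real set" where
  "gls_cylinder q a ws = foldr (\<lambda>i g. gls_map q a i \<circ> g) ws id ` {0..1}"

text \<open>The point with GLS-digit sequence alpha (alpha 0 is the first digit):
  the unique point of the intersection of the nested cylinders.\<close>
definition gls_point :: "(nat \<Rightarrow> real) \<Rightarrow> (nat \<Rightarrow> real) \<Rightarrow> (nat \<Rightarrow> nat) \<Rightarrow> real" where
  "gls_point q a \<alpha> = (THE x. x \<in> (\<Inter>n. gls_cylinder q a (map \<alpha> [0..<n])))"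

definition gls_set :: "(nat \<Rightarrow> real) \<Rightarrow> (nat \<Rightarrow> real) \<Rightarrow> nat set \<Rightarrow> real set" where
  "gls_set q a V = {gls_point q a \<alpha> | \<alpha>. \<forall>k. \<alpha> k \<in> V}"

end

theory Submission
  imports Defs "HOL-Library.Sublist"
begin

text \<open>
  Upper bound: the rank-\<open>n\<close> cylinders over \<open>V\<close> cover the set, have length at most \<open>qbound ^ n\<close>,
  and the sum of their \<open>t\<close>-th powers is \<open>(\<Sum>i\<in>V. q i powr t) ^ n\<close>, which tends to \<open>0\<close> when
  \<open>\<Sum>i\<in>V. q i powr t < 1\<close>; so the \<open>t\<close>-dimensional Hausdorff measure vanishes.

  Lower bound: if \<open>\<Sum>i\<in>V. q i powr y \<ge> 1\<close> and \<open>s < y\<close>, a finite \<open>F \<subseteq> V\<close> already has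
  \<open>\<Sum>i\<in>F. q i powr s > 1\<close>, and by continuity \<open>\<Sum>i\<in>F. q i powr t = 1\<close> for some \<open>t \<ge> s\<close>.
  Over the finite alphabet \<open>F\<close> the \<open>t\<close>-mass of cylinders is preserved under refinement, and
  compactness (the fan theorem) turns every cover into finitely many cylinders of total mass
  at least \<open>1\<close>. A set of diameter \<open>D\<close> meets cylinders of length comparable to \<open>D\<close> with
  disjoint interiors, hence of total \<open>t\<close>-mass \<open>O(D powr t)\<close>; so every cover has
  \<open>\<Sum> diameter powr t\<close> bounded below and the dimension is at least \<open>t\<close>.
\<close>

lemma image_affine_greaterThanLessThan:
  fixes c m l u :: real
  assumes "0 < m"
  shows "(\<lambda>x. c + m * x) ` {l<..<u} = {c + m * l<..<c + m * u}"
proof safe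
  fix y assume "y \<in> {c + m * l<..<c + m * u}"
  then have "(y - c) / m \<in> {l<..<u}" "y = c + m * ((y - c) / m)"
    using assms by (auto simp: field_simps)
  then show "y \<in> (\<lambda>x. c + m * x) ` {l<..<u}" by blast
qed (use assms in auto)

lemma sum_le_infsum_ennreal:
  fixes f :: "'a \<Rightarrow> ennreal"
  assumes "finite G" "G \<subseteq> A"
  shows "sum f G \<le> infsum f A"
  using assms by (subst nonneg_infsum_complete) (auto intro: SUP_upper)

lemma sum_UN_le:
  fixes f :: "'a \<Rightarrow> real"
  assumes "finite I" "\<And>i. i \<in> I \<Longrightarrow> finite (A i)" "\<And>x. 0 \<le> f x"
  shows "sum f (\<Union>i\<in>I. A i) \<le> (\<Sum>i\<in>I. sum f (A i))"
  using assms(1,2)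
proof (induction I rule: finite_induct)
  case (insert i I)
  have "sum f (A i \<union> (\<Union>j\<in>I. A j)) \<le> sum f (A i) + sum f (\<Union>j\<in>I. A j)"
    using insert.prems sum_Un[of "A i" "\<Union>j\<in>I. A j" f] insert.hyps(1) assms(3)
    by (simp add: sum_nonneg)
  then show ?case
    using insert by simp
qed simp

lemma sum_interval_lengths_le:
  fixes c l :: "'a \<Rightarrow> real"
  assumes "finite G" "A \<le> B"
    and box: "\<And>w. w \<in> G \<Longrightarrow> 0 \<le> l w \<and> A \<le> c w \<and> c w + l w \<le> B"
    and disjoint: "disjoint_family_on (\<lambda>w. {c w<..<c w + l w}) G"
  shows "(\<Sum>w\<in>G. l w) \<le> B - A"
proof -
  have "ennreal (\<Sum>w\<in>G. l w) = (\<Sum>w\<in>G. emeasure lborel {c w<..<c w + l w})"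
    using box by (simp add: sum_ennreal)
  also have "\<dots> = emeasure lborel (\<Union>w\<in>G. {c w<..<c w + l w})"
    using assms(1) disjoint by (intro sum_emeasure) auto
  also have "\<dots> \<le> emeasure lborel {A..B}"
  proof (rule emeasure_mono)
    show "(\<Union>w\<in>G. {c w<..<c w + l w}) \<subseteq> {A..B}"
    proof
      fix z assume "z \<in> (\<Union>w\<in>G. {c w<..<c w + l w})"
      then obtain w where "w \<in> G" "c w < z" "z < c w + l w" by auto
      then show "z \<in> {A..B}" using box[of w] by auto
    qed
  qed simp
  also have "\<dots> = ennreal (B - A)"
    using assms(2) by simp
  finally show ?thesis
    using assms(2) by (simp add: ennreal_le_iff)
qed

text \<open>Members of a cover may have diameter \<open>0\<close>, while the counting argument of the lower bound
  needs positive scales.\<close>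

lemma positive_padding_powr:
  fixes d :: "nat \<Rightarrow> real"
  assumes "\<And>j. 0 \<le> d j" "\<And>j. d j \<le> 1/2" "0 < t" "t \<le> 1" "0 < \<epsilon>"
  shows "\<exists>D. (\<forall>j. d j \<le> D j \<and> 0 < D j \<and> D j \<le> 1) \<and>
    (\<forall>J. finite J \<longrightarrow> (\<Sum>j\<in>J. D j powr t) \<le> (\<Sum>j\<in>J. d j powr t) + \<epsilon>)"
proof -
  define \<epsilon>' where "\<epsilon>' = min \<epsilon> 1"
  have \<epsilon>': "0 < \<epsilon>'" "\<epsilon>' \<le> 1" "\<epsilon>' \<le> \<epsilon>"
    using assms(5) by (auto simp: \<epsilon>'_def)
  define \<eta> where "\<eta> j = (\<epsilon>' * (1/2) ^ Suc j) powr (1 / t)" for j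
  have \<eta>: "0 < \<eta> j" "\<eta> j \<le> 1/2" "\<eta> j powr t = \<epsilon>' * (1/2) ^ Suc j" for j
  proof -
    have "(1/2::real) ^ Suc j \<le> 1/2"
      by (simp add: mult_left_le power_le_one)
    then have "\<epsilon>' * (1/2) ^ Suc j \<le> 1/2"
      using \<epsilon>' mult_mono[of "\<epsilon>'" 1 "(1/2) ^ Suc j" "1/2"] by simp
    moreover have "0 < \<epsilon>' * (1/2) ^ Suc j" "1 \<le> 1 / t"
      using \<epsilon>' assms(3,4) by simp_all
    ultimately show "0 < \<eta> j" "\<eta> j \<le> 1/2" "\<eta> j powr t = \<epsilon>' * (1/2) ^ Suc j"
      unfolding \<eta>_def using assms(3) powr_le_one_le[of "\<epsilon>' * (1/2) ^ Suc j" "1 / t"]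
      by (auto simp: powr_powr)
  qed
  define D where "D j = max (d j) (\<eta> j)" for j
  have D_powr: "D j powr t \<le> d j powr t + \<epsilon>' * (1/2) ^ Suc j" for j
  proof (cases "d j \<le> \<eta> j")
    case True
    then have "D j = \<eta> j"
      by (simp add: D_def)
    then show ?thesis
      unfolding \<open>D j = \<eta> j\<close> using \<eta>(3)[of j] powr_ge_zero[of "d j" t] by linarith
  next
    case False
    then have "D j = d j"
      by (simp add: D_def)
    then show ?thesis
      using \<epsilon>' by simp
  qed
  have "(\<Sum>j\<in>J. D j powr t) \<le> (\<Sum>j\<in>J. d j powr t) + \<epsilon>" if "finite J" for J
  proof -
    have "(\<Sum>j\<in>J. (1/2::real) ^ Suc j) \<le> (\<Sum>j. (1/2) ^ Suc j)"
      using that power_half_series by (intro sum_le_suminf) (auto simp: sums_iff)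
    then have "(\<Sum>j\<in>J. (1/2::real) ^ Suc j) \<le> 1"
      using sums_unique[OF power_half_series] by simp
    then have "\<epsilon>' * (\<Sum>j\<in>J. (1/2) ^ Suc j) \<le> \<epsilon>'"
      using \<epsilon>' by (intro mult_left_le) auto
    moreover have "(\<Sum>j\<in>J. D j powr t) \<le> (\<Sum>j\<in>J. d j powr t) + \<epsilon>' * (\<Sum>j\<in>J. (1/2) ^ Suc j)"
      unfolding sum_distrib_left sum.distrib[symmetric] by (rule sum_mono) (rule D_powr)
    ultimately show ?thesis
      using \<epsilon>'(3) by linarith
  qed
  moreover have "d j \<le> D j" "0 < D j" "D j \<le> 1" for j
    using \<eta>[of j] assms(2)[of j] by (auto simp: D_def)
  ultimately show ?thesis
    by blast
qed

definition delta_covers :: "real \<Rightarrow> real set \<Rightarrow> (nat \<Rightarrow> real set) set" where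
  "delta_covers \<delta> A = {U. A \<subseteq> (\<Union>n. U n) \<and> (\<forall>n. bounded (U n) \<and> diameter (U n) \<le> \<delta>)}"

lemma hausdorff_pre_altdef:
  "hausdorff_pre s \<delta> A = (INF U\<in>delta_covers \<delta> A. \<Sum>n. ennreal (diameter (U n) powr s))"
  by (simp add: hausdorff_pre_def delta_covers_def)

lemma hausdorff_pre_mono:
  "A \<subseteq> B \<Longrightarrow> hausdorff_pre s \<delta> A \<le> hausdorff_pre s \<delta> B"
  unfolding hausdorff_pre_altdef delta_covers_def by (intro INF_superset_mono) auto

lemma hausdorff_pre_antimono_exponent:
  assumes "\<delta> \<le> 1" "s \<le> t"
  shows "hausdorff_pre t \<delta> A \<le> hausdorff_pre s \<delta> A"
  unfolding hausdorff_pre_altdef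
proof (rule INF_mono)
  fix U assume U: "U \<in> delta_covers \<delta> A"
  have "diameter (U n) powr t \<le> diameter (U n) powr s" for n
  proof -
    have "0 \<le> diameter (U n)" "diameter (U n) \<le> \<delta>"
      using U diameter_ge_0[of "U n"] by (auto simp: delta_covers_def)
    then show ?thesis using assms by (intro powr_mono') auto
  qed
  then have "(\<Sum>n. ennreal (diameter (U n) powr t)) \<le> (\<Sum>n. ennreal (diameter (U n) powr s))"
    by (intro suminf_le summableI ennreal_leI)
  then show "\<exists>U'\<in>delta_covers \<delta> A.
      (\<Sum>n. ennreal (diameter (U' n) powr t)) \<le> (\<Sum>n. ennreal (diameter (U n) powr s))"
    using U by blast
qed

lemma hausdorff_pre_le_measure: "0 < \<delta> \<Longrightarrow> hausdorff_pre s \<delta> A \<le> hausdorff_measure s A"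
  unfolding hausdorff_measure_def by (rule SUP_upper) simp

lemma hausdorff_dim_nonneg: "0 \<le> hausdorff_dim A"
  unfolding hausdorff_dim_def by (rule INF_greatest) auto

lemma hausdorff_dim_le:
  "0 \<le> t \<Longrightarrow> hausdorff_measure t A = 0 \<Longrightarrow> hausdorff_dim A \<le> ereal t"
  unfolding hausdorff_dim_def by (rule INF_lower) auto

lemma hausdorff_dim_ge:
  assumes "0 < \<delta>" "\<delta> \<le> 1" "0 < hausdorff_pre t \<delta> A"
  shows "ereal t \<le> hausdorff_dim A"
  unfolding hausdorff_dim_def
proof (rule INF_greatest)
  fix s assume "s \<in> {s. 0 \<le> s \<and> hausdorff_measure s A = 0}"
  then have "hausdorff_pre s \<delta> A = 0"
    using hausdorff_pre_le_measure[OF assms(1), of s A] by simp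
  then have "\<not> s < t"
    using hausdorff_pre_antimono_exponent[OF assms(2), of s t A] assms(3) by auto
  then show "ereal t \<le> ereal s" by simp
qed

section \<open>Words and the fan theorem\<close>

definition words :: "nat set \<Rightarrow> nat \<Rightarrow> nat list set" where
  "words F n = {ws. set ws \<subseteq> F \<and> length ws = n}"

lemma finite_words: "finite F \<Longrightarrow> finite (words F n)"
  unfolding words_def by (rule finite_lists_length_eq)

lemma infinite_words:
  assumes "infinite F" "0 < n"
  shows "infinite (words F n)"
proof
  assume "finite (words F n)"
  moreover have "(\<lambda>i. replicate n i) ` F \<subseteq> words F n" "inj_on (\<lambda>i. replicate n i) F"
    using assms(2) by (auto simp: words_def inj_on_def)
  ultimately show False
    using assms(1) finite_imageD finite_subset by blast
qed

lemma words_0: "words F 0 = {[]}"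
  by (auto simp: words_def)

lemma words_Suc: "words F (Suc n) = (\<lambda>(i, ws). i # ws) ` (F \<times> words F n)"
  by (auto simp: words_def length_Suc_conv image_iff)

lemma extension_path:
  assumes "P []" and extend: "\<And>w. P w \<Longrightarrow> \<exists>i\<in>F. P (w @ [i])"
  shows "\<exists>\<alpha>. (\<forall>k. \<alpha> k \<in> F) \<and> (\<forall>n. P (map \<alpha> [0..<n]))"
proof -
  obtain next_digit where next_digit: "\<And>w. P w \<Longrightarrow> next_digit w \<in> F \<and> P (w @ [next_digit w])"
    using extend by metis
  define ws where "ws = rec_nat [] (\<lambda>_ w. w @ [next_digit w])"
  define \<alpha> where "\<alpha> k = next_digit (ws k)" for k
  have ws_0: "ws 0 = []" and ws_Suc: "ws (Suc n) = ws n @ [\<alpha> n]" for n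
    by (simp_all add: ws_def \<alpha>_def)
  have P_ws: "P (ws n)" for n
    by (induction n) (simp_all add: ws_0 ws_Suc \<alpha>_def next_digit \<open>P []\<close>)
  have ws_eq: "ws n = map \<alpha> [0..<n]" for n
    by (induction n) (simp_all add: ws_0 ws_Suc)
  have "\<alpha> k \<in> F" for k
    using next_digit P_ws by (simp add: \<alpha>_def)
  moreover have "P (map \<alpha> [0..<n])" for n
    using P_ws[of n] by (simp add: ws_eq)
  ultimately show ?thesis
    by blast
qed

lemma fan_theorem:
  assumes "finite F"
    and bar: "\<And>\<alpha>. (\<And>k. \<alpha> k \<in> F) \<Longrightarrow> \<exists>n. map \<alpha> [0..<n] \<in> W"
  shows "\<exists>N. \<forall>v\<in>words F N. \<exists>u\<in>W. prefix u v"
proof (rule ccontr)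
  assume not_uniform: "\<not> ?thesis"
  define unbarred where
    "unbarred w \<longleftrightarrow> (\<forall>N. \<exists>v\<in>words F N. \<forall>u\<in>W. \<not> prefix u (w @ v))" for w
  have "unbarred []"
    using not_uniform by (auto simp: unbarred_def)
  moreover have "\<exists>i\<in>F. unbarred (w @ [i])" if w: "unbarred w" for w
  proof (rule ccontr)
    \<comment> \<open>otherwise each \<open>w @ [i]\<close> is barred at some depth \<open>M i\<close>,
      so \<open>w\<close> is barred at depth \<open>1 + (\<Sum>i\<in>F. M i)\<close>\<close>
    assume "\<not> (\<exists>i\<in>F. unbarred (w @ [i]))"
    then have "\<forall>i\<in>F. \<exists>N. \<forall>v\<in>words F N. \<exists>u\<in>W. prefix u (w @ i # v)"
      unfolding unbarred_def by auto
    then obtain M where M: "\<forall>i\<in>F. \<forall>v\<in>words F (M i). \<exists>u\<in>W. prefix u (w @ i # v)"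
      by (metis bchoice)
    obtain v where v: "v \<in> words F (Suc (\<Sum>i\<in>F. M i))" "\<And>u. u \<in> W \<Longrightarrow> \<not> prefix u (w @ v)"
      using w unfolding unbarred_def by blast
    then obtain i v' where i: "v = i # v'" "i \<in> F" and v': "set v' \<subseteq> F" "length v' = (\<Sum>i\<in>F. M i)"
      by (cases v) (auto simp: words_def)
    have "M i \<le> length v'"
      using assms(1) i(2) v'(2) by (simp add: member_le_sum)
    then have "take (M i) v' \<in> words F (M i)"
      using v'(1) by (auto simp: words_def dest: in_set_takeD)
    then obtain u where "u \<in> W" "prefix u (w @ i # take (M i) v')"
      using M i(2) by blast
    moreover have "prefix (w @ i # take (M i) v') (w @ v)"
      by (simp add: i(1) take_is_prefix)
    ultimately show False
      using v(2) prefix_order.trans by blast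
  qed
  ultimately have "\<exists>\<alpha>. (\<forall>k. \<alpha> k \<in> F) \<and> (\<forall>n. unbarred (map \<alpha> [0..<n]))"
    by (rule extension_path)
  then obtain \<alpha> where \<alpha>: "\<And>k. \<alpha> k \<in> F" and unbarred: "\<And>n. unbarred (map \<alpha> [0..<n])"
    by blast
  obtain n where "map \<alpha> [0..<n] \<in> W"
    using bar \<alpha> by blast
  moreover have "\<exists>v\<in>words F 0. \<forall>u\<in>W. \<not> prefix u (map \<alpha> [0..<n] @ v)"
    using unbarred[of n] unfolding unbarred_def by blast
  then have "\<forall>u\<in>W. \<not> prefix u (map \<alpha> [0..<n])"
    by (simp add: words_0)
  ultimately show False
    by (blast intro: prefix_order.refl)
qed

section \<open>Cylinders of a GLS system\<close>

locale gls_system =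
  fixes q a :: "nat \<Rightarrow> real"
  assumes q_pos: "\<And>i. q i > 0"
    and q_sums: "q sums 1"
    and intervals: "\<And>i. 0 \<le> a i \<and> a i + q i \<le> 1"
    and disj: "\<And>i j. i \<noteq> j \<Longrightarrow> {a i<..<a i + q i} \<inter> {a j<..<a j + q j} = {}"
begin

lemma sum_q_le_1: "finite G \<Longrightarrow> sum q G \<le> 1"
  using sum_le_suminf[of q G] q_sums q_pos by (auto simp: sums_iff less_imp_le)

lemma sum_q_less_1:
  assumes "finite G"
  shows "sum q G < 1"
proof -
  obtain k where "k \<notin> G" using assms ex_new_if_finite infinite_UNIV_nat by blast
  then have "sum q G + q k \<le> 1" using sum_q_le_1[of "insert k G"] assms by simp
  then show ?thesis using q_pos[of k] by simp
qed

text \<open>Two distinct \<open>q i\<close> sum to at most \<open>1\<close>, so every \<open>q i\<close> is bounded by \<open>qbound < 1\<close>.\<close>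

definition qbound :: real where
  "qbound = max (1 - q 0) (1 - q 1)"

lemma q_le_qbound: "q i \<le> qbound"
proof -
  have "q i + q j \<le> 1" if "i \<noteq> j" for j
    using sum_q_le_1[of "{i, j}"] that by simp
  from this[of 0] this[of 1] show ?thesis by (cases "i = 0") (auto simp: qbound_def)
qed

lemma qbound_less_1: "qbound < 1"
  using q_pos[of 0] q_pos[of 1] by (simp add: qbound_def)

lemma qbound_pos: "0 < qbound"
  using q_pos[of 0] q_le_qbound[of 0] by linarith

definition cyl_map :: "nat list \<Rightarrow> real \<Rightarrow> real" where
  "cyl_map ws = foldr (\<lambda>i g. gls_map q a i \<circ> g) ws id"

definition cyl_len :: "nat list \<Rightarrow> real" where
  "cyl_len ws = prod_list (map q ws)"

definition cyl_left :: "nat list \<Rightarrow> real" where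
  "cyl_left ws = cyl_map ws 0"

lemma cyl_map_Nil [simp]: "cyl_map [] = id"
  by (simp add: cyl_map_def)

lemma cyl_map_Cons [simp]: "cyl_map (i # ws) = gls_map q a i \<circ> cyl_map ws"
  by (simp add: cyl_map_def)

lemma cyl_map_append: "cyl_map (ws @ us) = cyl_map ws \<circ> cyl_map us"
  by (induction ws) (simp_all add: comp_assoc)

lemma cyl_len_Nil [simp]: "cyl_len [] = 1"
  by (simp add: cyl_len_def)

lemma cyl_len_Cons [simp]: "cyl_len (i # ws) = q i * cyl_len ws"
  by (simp add: cyl_len_def)

lemma cyl_len_append: "cyl_len (ws @ us) = cyl_len ws * cyl_len us"
  by (simp add: cyl_len_def)

lemma cyl_len_pos: "0 < cyl_len ws"
  by (induction ws) (simp_all add: q_pos)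

lemma cyl_left_Nil [simp]: "cyl_left [] = 0"
  by (simp add: cyl_left_def)

lemma cyl_left_Cons: "cyl_left (i # ws) = a i + q i * cyl_left ws"
  by (simp add: cyl_left_def gls_map_def)

lemma cyl_map_affine: "cyl_map ws x = cyl_left ws + cyl_len ws * x"
  by (induction ws arbitrary: x) (simp_all add: gls_map_def cyl_left_Cons algebra_simps)

lemma cyl_left_append: "cyl_left (ws @ us) = cyl_left ws + cyl_len ws * cyl_left us"
proof -
  have "cyl_left (ws @ us) = cyl_map ws (cyl_left us)"
    by (simp add: cyl_left_def cyl_map_append)
  then show ?thesis
    by (simp add: cyl_map_affine)
qed

lemma gls_cylinder_eq: "gls_cylinder q a ws = {cyl_left ws .. cyl_left ws + cyl_len ws}"
proof -
  have affine: "cyl_map ws = (\<lambda>x. cyl_len ws * x + cyl_left ws)"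
    by (rule ext) (simp add: cyl_map_affine)
  have "gls_cylinder q a ws = cyl_map ws ` {0..1}"
    by (simp add: gls_cylinder_def cyl_map_def)
  also have "\<dots> = {cyl_left ws .. cyl_left ws + cyl_len ws}"
    unfolding affine image_affinity_atLeastAtMost using cyl_len_pos[of ws] by (simp add: add.commute)
  finally show ?thesis .
qed

lemma cylinder_in_unit: "0 \<le> cyl_left ws \<and> cyl_left ws + cyl_len ws \<le> 1"
proof (induction ws)
  case (Cons i ws)
  have "q i * (cyl_left ws + cyl_len ws) \<le> q i"
    using Cons q_pos[of i] by (simp add: mult_left_le)
  then show ?case using Cons intervals[of i] q_pos[of i] by (simp add: cyl_left_Cons algebra_simps)
qed simp

lemma cylinder_append_subset:
  "cyl_left ws \<le> cyl_left (ws @ us) \<and> cyl_left (ws @ us) + cyl_len (ws @ us) \<le> cyl_left ws + cyl_len ws"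
proof -
  have "cyl_len ws * (cyl_left us + cyl_len us) \<le> cyl_len ws"
    using cylinder_in_unit[of us] cyl_len_pos[of ws] by (simp add: mult_left_le)
  then show ?thesis
    using cylinder_in_unit[of us] cyl_len_pos[of ws]
    by (simp add: cyl_left_append cyl_len_append algebra_simps)
qed

lemma cyl_len_le_power: "cyl_len ws \<le> qbound ^ length ws"
proof (induction ws)
  case (Cons i ws)
  then show ?case
    using q_le_qbound[of i] q_pos[of i] cyl_len_pos[of ws] by (simp add: mult_mono)
qed simp

lemma cyl_len_le_1: "cyl_len ws \<le> 1"
  using cylinder_in_unit[of ws] by linarith

lemma cyl_len_prefix_le: "prefix u v \<Longrightarrow> cyl_len v \<le> cyl_len u"
  using cyl_len_pos[of u] cyl_len_le_1
  by (auto simp: prefix_def cyl_len_append intro: mult_left_le)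

lemma gls_point_in_cylinder:
  "gls_point q a \<alpha> \<in> gls_cylinder q a (map \<alpha> [0..<n])"
proof -
  define S where "S n = gls_cylinder q a (map \<alpha> [0..<n])" for n
  have closed: "closed (S n)" and nonempty: "S n \<noteq> {}" for n
    using cyl_len_pos[of "map \<alpha> [0..<n]"] by (simp_all add: S_def gls_cylinder_eq)
  have nested: "S n \<subseteq> S m" if "m \<le> n" for m n
  proof -
    have "map \<alpha> [0..<n] = map \<alpha> [0..<m] @ map \<alpha> [m..<n]"
      using that by (metis le_add_diff_inverse map_append upt_add_eq_append zero_le)
    then show ?thesis
      using cylinder_append_subset[of "map \<alpha> [0..<m]" "map \<alpha> [m..<n]"]
      unfolding S_def gls_cylinder_eq by (simp del: upt_Suc)
  qed
  have small: "\<exists>n. \<forall>x\<in>S n. \<forall>y\<in>S n. dist x y < \<epsilon>" if \<epsilon>: "\<epsilon> > 0" for \<epsilon>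
  proof -
    obtain n where n: "qbound ^ n < \<epsilon>"
      using real_arch_pow_inv[OF \<epsilon> qbound_less_1] by blast
    have "dist x y \<le> qbound ^ n" if "x \<in> S n" "y \<in> S n" for x y
    proof -
      have "dist x y \<le> cyl_len (map \<alpha> [0..<n])"
        using that unfolding S_def gls_cylinder_eq dist_real_def by auto
      also have "\<dots> \<le> qbound ^ n"
        using cyl_len_le_power[of "map \<alpha> [0..<n]"] by simp
      finally show ?thesis .
    qed
    then show ?thesis using n by (meson le_less_trans)
  qed
  obtain x where x: "\<Inter>(range S) = {x}"
    using decreasing_closed_nest_sing[OF closed nonempty nested small] by blast
  have "gls_point q a \<alpha> = x"
    unfolding gls_point_def S_def[symmetric] x by simp
  moreover have "x \<in> S n"
    using x by blast
  ultimately show ?thesis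
    by (simp add: S_def)
qed

definition cyl_interior :: "nat list \<Rightarrow> real set" where
  "cyl_interior ws = {cyl_left ws<..<cyl_left ws + cyl_len ws}"

lemma cyl_interior_append: "cyl_interior (ws @ us) = cyl_map ws ` cyl_interior us"
proof -
  have "cyl_map ws = (\<lambda>x. cyl_left ws + cyl_len ws * x)"
    using cyl_map_affine by blast
  then have "cyl_map ws ` cyl_interior us =
      {cyl_left ws + cyl_len ws * cyl_left us<..<cyl_left ws + cyl_len ws * (cyl_left us + cyl_len us)}"
    using image_affine_greaterThanLessThan[OF cyl_len_pos] by (simp only: cyl_interior_def)
  then show ?thesis
    by (simp add: cyl_interior_def cyl_left_append cyl_len_append algebra_simps)
qed

lemma cyl_interior_Cons_subset: "cyl_interior (i # ws) \<subseteq> {a i<..<a i + q i}"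
proof -
  have "cyl_interior ws \<subseteq> {0<..<1}"
    using cylinder_in_unit[of ws] by (auto simp: cyl_interior_def)
  then have "cyl_interior ([i] @ ws) \<subseteq> gls_map q a i ` {0<..<1}"
    unfolding cyl_interior_append by auto
  also have "\<dots> = {a i<..<a i + q i}"
    using q_pos[of i] by (simp add: gls_map_def[abs_def] image_affine_greaterThanLessThan)
  finally show ?thesis by simp
qed

lemma cyl_interior_disjoint:
  assumes "u \<parallel> v"
  shows "cyl_interior u \<inter> cyl_interior v = {}"
proof -
  obtain p i u' j v' where "i \<noteq> j" and uv: "u = p @ i # u'" "v = p @ j # v'"
    using parallel_decomp[OF assms] by blast
  have "cyl_interior (i # u') \<inter> cyl_interior (j # v') = {}"
    using disj[OF \<open>i \<noteq> j\<close>] cyl_interior_Cons_subset[of i u'] cyl_interior_Cons_subset[of j v']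
    by blast
  moreover have "inj (cyl_map p)"
    using cyl_len_pos[of p] by (simp add: inj_def cyl_map_affine)
  ultimately have "cyl_map p ` cyl_interior (i # u') \<inter> cyl_map p ` cyl_interior (j # v') = {}"
    by (simp add: image_Int[symmetric])
  then show ?thesis
    by (simp only: uv cyl_interior_append)
qed


section \<open>Upper bound\<close>

lemma gls_set_subset_cylinders: "gls_set q a V \<subseteq> (\<Union>ws\<in>words V n. gls_cylinder q a ws)"
proof
  fix x assume "x \<in> gls_set q a V"
  then obtain \<alpha> where x: "x = gls_point q a \<alpha>" and \<alpha>: "\<And>k. \<alpha> k \<in> V"
    unfolding gls_set_def by blast
  have "map \<alpha> [0..<n] \<in> words V n"
    using \<alpha> by (auto simp: words_def)
  then show "x \<in> (\<Union>ws\<in>words V n. gls_cylinder q a ws)"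
    using gls_point_in_cylinder[of \<alpha> n] x by blast
qed

lemma sum_words_powr:
  assumes "finite F"
  shows "(\<Sum>ws\<in>words F n. cyl_len ws powr t) = (\<Sum>i\<in>F. q i powr t) ^ n"
proof (induction n)
  case (Suc n)
  have "(\<Sum>ws\<in>words F (Suc n). cyl_len ws powr t) =
      (\<Sum>(i, ws)\<in>F \<times> words F n. q i powr t * cyl_len ws powr t)"
    unfolding words_Suc using q_pos cyl_len_pos
    by (subst sum.reindex) (auto simp: inj_on_def powr_mult less_imp_le intro!: sum.cong)
  also have "\<dots> = (\<Sum>i\<in>F. q i powr t) * (\<Sum>ws\<in>words F n. cyl_len ws powr t)"
    by (simp add: sum_product sum.cartesian_product)
  finally show ?case using Suc by simp
qed (simp add: words_0)

lemma sum_words_le_infsum_power: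
  assumes "finite G" "G \<subseteq> words V n"
  shows "(\<Sum>ws\<in>G. ennreal (cyl_len ws powr t)) \<le> (\<Sum>\<^sub>\<infinity>i\<in>V. ennreal (q i powr t)) ^ n"
proof -
  define H where "H = \<Union>(set ` G)"
  have H: "finite H" "H \<subseteq> V" "G \<subseteq> words H n"
    using assms by (auto simp: H_def words_def)
  have "(\<Sum>ws\<in>G. ennreal (cyl_len ws powr t)) \<le> (\<Sum>ws\<in>words H n. ennreal (cyl_len ws powr t))"
    using H by (intro sum_mono2 finite_words) auto
  also have "\<dots> = ennreal ((\<Sum>i\<in>H. q i powr t) ^ n)"
    by (simp add: sum_ennreal sum_words_powr H(1))
  also have "\<dots> = (\<Sum>i\<in>H. ennreal (q i powr t)) ^ n"
    by (simp add: ennreal_power[symmetric] sum_nonneg sum_ennreal)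
  also have "\<dots> \<le> (\<Sum>\<^sub>\<infinity>i\<in>V. ennreal (q i powr t)) ^ n"
    using H by (intro power_mono sum_le_infsum_ennreal) auto
  finally show ?thesis .
qed

lemma hausdorff_pre_gls_set_le:
  assumes "infinite V" "0 < n" "qbound ^ n \<le> \<delta>"
  shows "hausdorff_pre t \<delta> (gls_set q a V) \<le> (\<Sum>\<^sub>\<infinity>i\<in>V. ennreal (q i powr t)) ^ n"
proof -
  define e where "e = from_nat_into (words V n)"
  have e: "bij_betw e UNIV (words V n)"
    unfolding e_def using infinite_words[OF assms(1,2)]
    by (rule bij_betw_from_nat_into[OF countableI_type])
  define U where "U k = gls_cylinder q a (e k)" for k
  have diameter_U: "diameter (U k) = cyl_len (e k)" for k
    using cyl_len_pos[of "e k"] by (simp add: U_def gls_cylinder_eq)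
  have "U \<in> delta_covers \<delta> (gls_set q a V)"
  proof -
    have "words V n = range e"
      using e by (simp add: bij_betw_def)
    then have "gls_set q a V \<subseteq> (\<Union>k. U k)"
      using gls_set_subset_cylinders[of V n] by (simp add: U_def image_image)
    moreover have "cyl_len (e k) \<le> \<delta>" for k
    proof -
      have "e k \<in> words V n"
        using e by (auto simp: bij_betw_def)
      then have "cyl_len (e k) \<le> qbound ^ n"
        using cyl_len_le_power[of "e k"] by (simp add: words_def)
      then show ?thesis
        using assms(3) by simp
    qed
    moreover have "bounded (U k)" for k
      by (simp add: U_def gls_cylinder_eq)
    ultimately show ?thesis
      by (simp add: delta_covers_def diameter_U)
  qed
  then have "hausdorff_pre t \<delta> (gls_set q a V) \<le> (\<Sum>k. ennreal (diameter (U k) powr t))"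
    unfolding hausdorff_pre_altdef by (rule INF_lower)
  also have "\<dots> \<le> (\<Sum>\<^sub>\<infinity>i\<in>V. ennreal (q i powr t)) ^ n"
  proof (rule suminf_le_const[OF summableI])
    fix N
    have "inj_on e {..<N}"
      using e by (auto simp: bij_betw_def inj_on_def)
    then have "(\<Sum>k<N. ennreal (diameter (U k) powr t)) =
        (\<Sum>ws\<in>e ` {..<N}. ennreal (cyl_len ws powr t))"
      by (simp add: sum.reindex diameter_U)
    also have "\<dots> \<le> (\<Sum>\<^sub>\<infinity>i\<in>V. ennreal (q i powr t)) ^ n"
      using e by (intro sum_words_le_infsum_power) (auto simp: bij_betw_def)
    finally show "(\<Sum>k<N. ennreal (diameter (U k) powr t)) \<le> (\<Sum>\<^sub>\<infinity>i\<in>V. ennreal (q i powr t)) ^ n" .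
  qed
  finally show ?thesis .
qed

lemma hausdorff_measure_gls_set_eq_0:
  assumes "infinite V" and less_1: "(\<Sum>\<^sub>\<infinity>i\<in>V. ennreal (q i powr t)) < 1"
  shows "hausdorff_measure t (gls_set q a V) = 0"
proof -
  obtain \<sigma> where \<sigma>: "(\<Sum>\<^sub>\<infinity>i\<in>V. ennreal (q i powr t)) = ennreal \<sigma>" "0 \<le> \<sigma>" "\<sigma> < 1"
    using less_1 by (cases "\<Sum>\<^sub>\<infinity>i\<in>V. ennreal (q i powr t)" rule: ennreal_cases) auto
  have "hausdorff_pre t \<delta> (gls_set q a V) = 0" if "0 < \<delta>" for \<delta>
  proof (rule antisym[OF ennreal_le_epsilon zero_le])
    fix \<epsilon> :: real assume "0 < \<epsilon>"
    obtain m where m: "\<sigma> ^ m < \<epsilon>"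
      using real_arch_pow_inv[OF \<open>0 < \<epsilon>\<close> \<sigma>(3)] by blast
    obtain k where k: "qbound ^ k < \<delta>"
      using real_arch_pow_inv[OF \<open>0 < \<delta>\<close> qbound_less_1] by blast
    define n where "n = Suc (m + k)"
    have "qbound ^ n \<le> qbound ^ k" "\<sigma> ^ n \<le> \<sigma> ^ m"
      using qbound_pos qbound_less_1 \<sigma> by (auto intro!: power_decreasing simp del: power_Suc simp: n_def)
    then have "hausdorff_pre t \<delta> (gls_set q a V) \<le> (\<Sum>\<^sub>\<infinity>i\<in>V. ennreal (q i powr t)) ^ n"
      using k by (intro hausdorff_pre_gls_set_le[OF assms(1)]) (auto simp: n_def)
    also have "\<dots> = ennreal (\<sigma> ^ n)"
      using \<sigma> by (simp add: ennreal_power)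
    also have "\<dots> \<le> 0 + ennreal \<epsilon>"
      using \<open>\<sigma> ^ n \<le> \<sigma> ^ m\<close> m by (simp add: ennreal_leI)
    finally show "hausdorff_pre t \<delta> (gls_set q a V) \<le> 0 + ennreal \<epsilon>" .
  qed
  then show ?thesis by (simp add: hausdorff_measure_def)
qed

section \<open>Lower bound\<close>

lemma sum_prefix_words_powr:
  assumes "finite F" "(\<Sum>i\<in>F. q i powr t) = 1" "set u \<subseteq> F" "length u \<le> N"
  shows "(\<Sum>v\<in>{v\<in>words F N. prefix u v}. cyl_len v powr t) = cyl_len u powr t"
proof -
  have "{v\<in>words F N. prefix u v} = (\<lambda>w. u @ w) ` words F (N - length u)"
    using assms(3,4) by (auto simp: words_def prefix_def)
  then have "(\<Sum>v\<in>{v\<in>words F N. prefix u v}. cyl_len v powr t) =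
      (\<Sum>w\<in>words F (N - length u). cyl_len u powr t * cyl_len w powr t)"
    using cyl_len_pos by (simp add: sum.reindex inj_on_def cyl_len_append powr_mult less_imp_le)
  also have "\<dots> = cyl_len u powr t"
    using assms(1,2) by (simp add: sum_distrib_left[symmetric] sum_words_powr)
  finally show ?thesis .
qed

text \<open>For \<open>\<Sum>i\<in>F. q i powr t = 1\<close> the \<open>t\<close>-mass \<open>cyl_len w powr t\<close> of a word is the total
  mass of its extensions of any fixed length, so a bar carries mass at least \<open>1\<close>.\<close>

lemma bar_weight_ge_1:
  assumes "finite F" "(\<Sum>i\<in>F. q i powr t) = 1"
    and bar: "\<And>\<alpha>. (\<And>k. \<alpha> k \<in> F) \<Longrightarrow> \<exists>n. map \<alpha> [0..<n] \<in> W"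
  shows "\<exists>W'. finite W' \<and> W' \<subseteq> W \<and> 1 \<le> (\<Sum>u\<in>W'. cyl_len u powr t)"
proof -
  obtain N where N: "\<forall>v\<in>words F N. \<exists>u\<in>W. prefix u v"
    using fan_theorem[OF assms(1) bar] by blast
  define W' where "W' = W \<inter> {u. set u \<subseteq> F \<and> length u \<le> N}"
  have W': "finite W'" "W' \<subseteq> W"
    using finite_lists_length_le[OF assms(1)] by (auto simp: W'_def)
  have "1 = (\<Sum>v\<in>words F N. cyl_len v powr t)"
    using sum_words_powr[OF assms(1)] assms(2) by simp
  also have "\<dots> \<le> (\<Sum>v\<in>(\<Union>u\<in>W'. {v\<in>words F N. prefix u v}). cyl_len v powr t)"
  proof (rule sum_mono2)
    show "finite (\<Union>u\<in>W'. {v\<in>words F N. prefix u v})"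
      using W'(1) finite_words[OF assms(1)] by auto
    show "words F N \<subseteq> (\<Union>u\<in>W'. {v\<in>words F N. prefix u v})"
      using N by (fastforce simp: W'_def words_def dest: prefix_length_le set_mono_prefix)
  qed auto
  also have "\<dots> \<le> (\<Sum>u\<in>W'. \<Sum>v\<in>{v\<in>words F N. prefix u v}. cyl_len v powr t)"
    using W'(1) finite_words[OF assms(1)] by (intro sum_UN_le) auto
  also have "\<dots> = (\<Sum>u\<in>W'. cyl_len u powr t)"
    using assms(1,2) by (intro sum.cong refl sum_prefix_words_powr) (auto simp: W'_def)
  finally show ?thesis
    using W' by blast
qed

definition stopping_words :: "nat set \<Rightarrow> real \<Rightarrow> nat list set" where
  "stopping_words F D = {w. set w \<subseteq> F \<and> cyl_len w \<le> D \<and> (w = [] \<or> D < cyl_len (butlast w))}"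

lemma stopping_words_parallel:
  assumes "u \<in> stopping_words F D" "v \<in> stopping_words F D" "u \<noteq> v"
  shows "u \<parallel> v"
proof -
  have "\<not> prefix u v" if "u \<in> stopping_words F D" "v \<in> stopping_words F D" "u \<noteq> v" for u v
  proof
    assume "prefix u v"
    moreover have "v \<noteq> []"
      using \<open>prefix u v\<close> that(3) by auto
    ultimately have "prefix u (butlast v)"
      using that(3) prefix_snoc[of u "butlast v" "last v"] by simp
    then have "cyl_len (butlast v) \<le> D"
      using cyl_len_prefix_le that(1) by (force simp: stopping_words_def)
    then show False
      using that(2) \<open>v \<noteq> []\<close> by (simp add: stopping_words_def)
  qed
  then show ?thesis
    using assms by blast
qed

lemma stopping_word_len_ge:
  assumes "w \<in> stopping_words F D" "0 < D" "D \<le> 1" "0 \<le> qm" "qm \<le> 1"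
    and "\<And>i. i \<in> F \<Longrightarrow> qm \<le> q i"
  shows "qm * D \<le> cyl_len w"
proof (cases "w = []")
  case True
  then show ?thesis using assms by (simp add: mult_le_one)
next
  case False
  have "cyl_len w = cyl_len (butlast w @ [last w])"
    using False by simp
  also have "\<dots> = q (last w) * cyl_len (butlast w)"
    by (simp add: cyl_len_append)
  finally have "cyl_len w = q (last w) * cyl_len (butlast w)" .
  moreover have "D < cyl_len (butlast w)" "qm \<le> q (last w)"
    using assms(1,6) False last_in_set by (auto simp: stopping_words_def)
  ultimately show ?thesis
    using assms(2,4) by (simp add: mult_mono)
qed

lemma stopping_word_prefix_exists:
  assumes "0 < D" "\<And>k. \<alpha> k \<in> F"
  shows "\<exists>n. map \<alpha> [0..<n] \<in> stopping_words F D"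
proof -
  define short where "short n \<longleftrightarrow> cyl_len (map \<alpha> [0..<n]) \<le> D" for n
  obtain k where "qbound ^ k < D"
    using real_arch_pow_inv[OF assms(1) qbound_less_1] by blast
  moreover have "cyl_len (map \<alpha> [0..<k]) \<le> qbound ^ k"
    using cyl_len_le_power[of "map \<alpha> [0..<k]"] by simp
  ultimately have "short k"
    by (simp add: short_def)
  define n where "n = (LEAST n. short n)"
  have "short n"
    unfolding n_def using \<open>short k\<close> by (rule LeastI)
  have "D < cyl_len (butlast (map \<alpha> [0..<n]))" if "n = Suc m" for m
  proof -
    have "\<not> short m"
      using not_less_Least[of m short] that by (simp add: n_def)
    then show ?thesis
      using that by (simp add: short_def)
  qed
  then have "map \<alpha> [0..<n] = [] \<or> D < cyl_len (butlast (map \<alpha> [0..<n]))"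
    by (cases n) auto
  then show ?thesis
    using \<open>short n\<close> assms(2) by (auto simp: stopping_words_def short_def)
qed

lemma sum_cyl_len_meeting_le:
  assumes "finite G" "G \<subseteq> stopping_words F D"
    and meets: "\<And>w. w \<in> G \<Longrightarrow> gls_cylinder q a w \<inter> U \<noteq> {}"
    and "bounded U" "diameter U \<le> D"
  shows "(\<Sum>w\<in>G. cyl_len w) \<le> 4 * D"
proof (cases "G = {}")
  case True
  then show ?thesis using assms(4,5) diameter_ge_0 by force
next
  case False
  then obtain x0 where x0: "x0 \<in> U"
    using meets by blast
  have box: "0 \<le> cyl_len w \<and> x0 - 2 * D \<le> cyl_left w \<and> cyl_left w + cyl_len w \<le> x0 + 2 * D"
    if w: "w \<in> G" for w
  proof -
    obtain y where y: "y \<in> gls_cylinder q a w" "y \<in> U"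
      using meets[OF w] by blast
    have "\<bar>y - x0\<bar> \<le> D"
      using diameter_bounded_bound[OF assms(4) y(2) x0] assms(5) by (simp add: dist_real_def)
    moreover have "cyl_len w \<le> D"
      using w assms(2) by (auto simp: stopping_words_def)
    ultimately show ?thesis
      using y(1) cyl_len_pos[of w] by (auto simp: gls_cylinder_eq)
  qed
  have "disjoint_family_on (\<lambda>w. {cyl_left w<..<cyl_left w + cyl_len w}) G"
    using stopping_words_parallel cyl_interior_disjoint assms(2)
    unfolding disjoint_family_on_def cyl_interior_def by blast
  then have "(\<Sum>w\<in>G. cyl_len w) \<le> (x0 + 2 * D) - (x0 - 2 * D)"
    using box \<open>G \<noteq> {}\<close> assms(1)
    by (intro sum_interval_lengths_le[where c = cyl_left and l = cyl_len]) force+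
  then show ?thesis by simp
qed

lemma sum_cyl_len_powr_meeting_le:
  assumes "finite G" "G \<subseteq> stopping_words F D"
    and "\<And>w. w \<in> G \<Longrightarrow> gls_cylinder q a w \<inter> U \<noteq> {}"
    and "bounded U" "diameter U \<le> D"
    and "0 < t" "t \<le> 1" "0 < D" "D \<le> 1" "0 < qm" "qm \<le> 1" "\<And>i. i \<in> F \<Longrightarrow> qm \<le> q i"
  shows "(\<Sum>w\<in>G. cyl_len w powr t) \<le> 4 * qm powr (t - 1) * D powr t"
proof -
  have "cyl_len w powr t \<le> (qm * D) powr (t - 1) * cyl_len w" if "w \<in> G" for w
  proof -
    have "qm * D \<le> cyl_len w"
      using that assms(2,8-12) by (intro stopping_word_len_ge) auto
    then have "cyl_len w powr (t - 1) \<le> (qm * D) powr (t - 1)"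
      using assms(7,8,10) by (intro powr_mono2') auto
    then have "cyl_len w powr (t - 1) * cyl_len w \<le> (qm * D) powr (t - 1) * cyl_len w"
      using cyl_len_pos[of w] by (intro mult_right_mono) auto
    moreover have "cyl_len w powr t = cyl_len w powr (t - 1) * cyl_len w"
      using cyl_len_pos[of w] powr_add[of "cyl_len w" "t - 1" 1] by simp
    ultimately show ?thesis
      by simp
  qed
  then have "(\<Sum>w\<in>G. cyl_len w powr t) \<le> (\<Sum>w\<in>G. (qm * D) powr (t - 1) * cyl_len w)"
    by (rule sum_mono)
  also have "\<dots> = (qm * D) powr (t - 1) * (\<Sum>w\<in>G. cyl_len w)"
    by (simp add: sum_distrib_left)
  also have "\<dots> \<le> (qm * D) powr (t - 1) * (4 * D)"
    using sum_cyl_len_meeting_le[OF assms(1-5)] by (intro mult_left_mono) auto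
  also have "\<dots> = 4 * qm powr (t - 1) * D powr t"
    using assms(8,10) powr_add[of D "t - 1" 1] by (simp add: powr_mult)
  finally show ?thesis .
qed

lemma gls_set_cover_weight:
  assumes "finite F" "(\<Sum>i\<in>F. q i powr t) = 1" "0 < t" "t \<le> 1"
    and qm: "0 < qm" "qm \<le> 1" "\<And>i. i \<in> F \<Longrightarrow> qm \<le> q i"
    and cover: "gls_set q a F \<subseteq> (\<Union>j. U j)"
    and U: "\<And>j. bounded (U j)" "\<And>j. diameter (U j) \<le> D j"
    and D: "\<And>j. 0 < D j" "\<And>j. D j \<le> 1"
  shows "\<exists>J. finite J \<and> 1 \<le> 4 * qm powr (t - 1) * (\<Sum>j\<in>J. D j powr t)"
proof -
  define W where "W j = {w \<in> stopping_words F (D j). gls_cylinder q a w \<inter> U j \<noteq> {}}" for j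
  have "\<exists>n. map \<alpha> [0..<n] \<in> (\<Union>j. W j)" if \<alpha>: "\<And>k. \<alpha> k \<in> F" for \<alpha>
  proof -
    have "gls_point q a \<alpha> \<in> gls_set q a F"
      using \<alpha> unfolding gls_set_def by blast
    then obtain j where j: "gls_point q a \<alpha> \<in> U j"
      using cover by blast
    obtain n where "map \<alpha> [0..<n] \<in> stopping_words F (D j)"
      using stopping_word_prefix_exists[of "D j" \<alpha> F] D(1) \<alpha> by blast
    then have "map \<alpha> [0..<n] \<in> W j"
      using gls_point_in_cylinder[of \<alpha> n] j unfolding W_def by blast
    then show ?thesis by blast
  qed
  then obtain W' where W': "finite W'" "W' \<subseteq> (\<Union>j. W j)" "1 \<le> (\<Sum>w\<in>W'. cyl_len w powr t)"
    using bar_weight_ge_1[OF assms(1,2)] by blast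
  obtain idx where idx: "\<And>w. w \<in> W' \<Longrightarrow> w \<in> W (idx w)"
    using W'(2) by (metis UN_E subsetD)
  have "1 \<le> (\<Sum>j\<in>idx ` W'. \<Sum>w\<in>{w\<in>W'. idx w = j}. cyl_len w powr t)"
    using W'(1,3) by (simp add: sum.group)
  also have "\<dots> \<le> (\<Sum>j\<in>idx ` W'. 4 * qm powr (t - 1) * D j powr t)"
  proof (rule sum_mono)
    fix j
    have "{w\<in>W'. idx w = j} \<subseteq> stopping_words F (D j)"
      "\<And>w. w \<in> {w\<in>W'. idx w = j} \<Longrightarrow> gls_cylinder q a w \<inter> U j \<noteq> {}"
      using idx unfolding W_def by auto
    then show "(\<Sum>w\<in>{w\<in>W'. idx w = j}. cyl_len w powr t) \<le> 4 * qm powr (t - 1) * D j powr t"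
      using W'(1) assms(3,4) qm U D
      by (intro sum_cyl_len_powr_meeting_le[where F = F and U = "U j"]) auto
  qed
  also have "\<dots> = 4 * qm powr (t - 1) * (\<Sum>j\<in>idx ` W'. D j powr t)"
    by (simp add: sum_distrib_left)
  finally show ?thesis
    using W'(1) by blast
qed

lemma Min_q_bounds:
  assumes "finite F" "F \<noteq> {}"
  shows "0 < Min (q ` F)" "Min (q ` F) \<le> 1"
proof -
  have "Min (q ` F) \<in> q ` F"
    using assms by (intro Min_in) auto
  moreover have "q i \<le> 1" for i
    using q_le_qbound[of i] qbound_less_1 by linarith
  ultimately show "0 < Min (q ` F)" "Min (q ` F) \<le> 1"
    using q_pos by auto
qed

lemma delta_cover_powr_sum_ge:
  assumes "finite F" "F \<noteq> {}" "(\<Sum>i\<in>F. q i powr t) = 1" "0 < t" "t \<le> 1"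
    and U: "U \<in> delta_covers (1/2) (gls_set q a F)"
  shows "ennreal (1 / (4 * Min (q ` F) powr (t - 1))) \<le> (\<Sum>j. ennreal (diameter (U j) powr t))"
proof (rule ennreal_le_epsilon)
  fix \<epsilon> :: real assume "0 < \<epsilon>"
  define K where "K = 4 * Min (q ` F) powr (t - 1)"
  have "0 < K"
    using Min_q_bounds[OF assms(1,2)] by (simp add: K_def)
  have Min_le_q: "Min (q ` F) \<le> q i" if "i \<in> F" for i
    using assms(1) that by (intro Min_le) auto
  have cover: "gls_set q a F \<subseteq> (\<Union>j. U j)"
    and bounded: "\<And>j. bounded (U j)" and small: "\<And>j. diameter (U j) \<le> 1/2"
    using U by (auto simp: delta_covers_def)
  obtain D where D: "\<forall>j. diameter (U j) \<le> D j \<and> 0 < D j \<and> D j \<le> 1"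
    and D_sum: "\<forall>J. finite J \<longrightarrow> (\<Sum>j\<in>J. D j powr t) \<le> (\<Sum>j\<in>J. diameter (U j) powr t) + \<epsilon>"
    using positive_padding_powr[where d = "\<lambda>j. diameter (U j)",
        OF diameter_ge_0[OF bounded] small assms(4,5) \<open>0 < \<epsilon>\<close>] by blast
  have "\<exists>J. finite J \<and> 1 \<le> K * (\<Sum>j\<in>J. D j powr t)"
    unfolding K_def
    using D by (intro gls_set_cover_weight[OF assms(1,3-5) Min_q_bounds[OF assms(1,2)] Min_le_q cover bounded]) auto
  then obtain J where J: "finite J" "1 \<le> K * (\<Sum>j\<in>J. D j powr t)"
    by blast
  then have "1 \<le> K * ((\<Sum>j\<in>J. diameter (U j) powr t) + \<epsilon>)"
    using mult_left_mono[OF D_sum[rule_format, OF J(1)], of K] \<open>0 < K\<close> by linarith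
  then have "1 / K \<le> (\<Sum>j\<in>J. diameter (U j) powr t) + \<epsilon>"
    using \<open>0 < K\<close> by (subst pos_divide_le_eq) (simp_all add: mult.commute)
  then have "ennreal (1 / K) \<le> ennreal ((\<Sum>j\<in>J. diameter (U j) powr t) + \<epsilon>)"
    by (rule ennreal_leI)
  also have "\<dots> = ennreal (\<Sum>j\<in>J. diameter (U j) powr t) + ennreal \<epsilon>"
    using \<open>0 < \<epsilon>\<close> by (intro ennreal_plus) (auto intro: sum_nonneg)
  also have "\<dots> = (\<Sum>j\<in>J. ennreal (diameter (U j) powr t)) + ennreal \<epsilon>"
    by (simp add: sum_ennreal)
  also have "\<dots> \<le> (\<Sum>j. ennreal (diameter (U j) powr t)) + ennreal \<epsilon>"
    using J(1) by (intro add_right_mono sum_le_suminf summableI) auto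
  finally show "ennreal (1 / (4 * Min (q ` F) powr (t - 1))) \<le>
      (\<Sum>j. ennreal (diameter (U j) powr t)) + ennreal \<epsilon>"
    by (simp add: K_def)
qed

lemma hausdorff_pre_gls_set_pos:
  assumes "finite F" "F \<noteq> {}" "(\<Sum>i\<in>F. q i powr t) = 1" "0 < t" "t \<le> 1"
  shows "0 < hausdorff_pre t (1/2) (gls_set q a F)"
proof -
  have "0 < ennreal (1 / (4 * Min (q ` F) powr (t - 1)))"
    using Min_q_bounds[OF assms(1,2)] by simp
  also have "\<dots> \<le> hausdorff_pre t (1/2) (gls_set q a F)"
    unfolding hausdorff_pre_altdef by (rule INF_greatest) (rule delta_cover_powr_sum_ge[OF assms])
  finally show ?thesis .
qed

lemma q_powr_le: "s \<le> y \<Longrightarrow> q i powr y \<le> qbound powr (y - s) * q i powr s"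
  using q_pos[of i] q_le_qbound[of i] powr_add[of "q i" "y - s" s]
  by (simp add: mult_right_mono powr_mono2)

lemma infsum_powr_less_1:
  assumes "1 < y"
  shows "(\<Sum>\<^sub>\<infinity>i\<in>V. ennreal (q i powr y)) < 1"
proof -
  have "(\<Sum>\<^sub>\<infinity>i\<in>V. ennreal (q i powr y)) \<le> ennreal (qbound powr (y - 1))"
  proof (subst nonneg_infsum_complete, simp, rule SUP_least, safe)
    fix G assume "finite G" "G \<subseteq> V"
    have "(\<Sum>i\<in>G. q i powr y) \<le> (\<Sum>i\<in>G. qbound powr (y - 1) * q i powr 1)"
      using assms by (intro sum_mono q_powr_le) simp
    also have "\<dots> = qbound powr (y - 1) * sum q G"
      using q_pos by (simp add: sum_distrib_left less_imp_le)
    also have "\<dots> \<le> qbound powr (y - 1)"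
      using sum_q_le_1[OF \<open>finite G\<close>] by (simp add: mult_left_le)
    finally show "(\<Sum>i\<in>G. ennreal (q i powr y)) \<le> ennreal (qbound powr (y - 1))"
      by (simp add: sum_ennreal ennreal_leI)
  qed
  also have "\<dots> < 1"
    using assms qbound_pos powr_less_mono2[of "y - 1" qbound 1] qbound_less_1 by simp
  finally show ?thesis .
qed

lemma exists_finite_powr_sum_eq_1:
  assumes y: "1 \<le> (\<Sum>\<^sub>\<infinity>i\<in>V. ennreal (q i powr y))" and "0 < s" "s < y"
  shows "\<exists>G t. finite G \<and> G \<subseteq> V \<and> G \<noteq> {} \<and> s \<le> t \<and> t \<le> 1 \<and> (\<Sum>i\<in>G. q i powr t) = 1"
proof -
  have "y \<le> 1"
    using infsum_powr_less_1[of y V] y by force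
  define c where "c = qbound powr (y - s)"
  have c: "0 < c" "c < 1"
    using assms qbound_pos powr_less_mono2[of "y - s" qbound 1] qbound_less_1 by (auto simp: c_def)
  then have "ennreal c < (SUP G\<in>{G. finite G \<and> G \<subseteq> V}. \<Sum>i\<in>G. ennreal (q i powr y))"
    using less_le_trans[OF _ y, of "ennreal c"] by (simp add: nonneg_infsum_complete)
  then obtain G where G: "finite G" "G \<subseteq> V" "ennreal c < (\<Sum>i\<in>G. ennreal (q i powr y))"
    by (auto simp: less_SUP_iff)
  then have "c < (\<Sum>i\<in>G. q i powr y)"
    using c(1) by (simp add: sum_ennreal ennreal_less_iff)
  also have "(\<Sum>i\<in>G. q i powr y) \<le> c * (\<Sum>i\<in>G. q i powr s)"
    unfolding c_def sum_distrib_left using assms by (intro sum_mono q_powr_le) simp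
  finally have above: "1 < (\<Sum>i\<in>G. q i powr s)"
    using c(1) mult_less_cancel_left_pos[of c 1] by simp
  then have "G \<noteq> {}"
    by auto
  have below: "(\<Sum>i\<in>G. q i powr 1) < 1"
    using sum_q_less_1[OF G(1)] q_pos by (simp add: less_imp_le)
  have "continuous_on {s..1} (\<lambda>t. \<Sum>i\<in>G. q i powr t)"
    using q_pos by (intro continuous_intros)
      (auto simp: less_imp_le order.strict_implies_not_eq[OF q_pos, symmetric])
  moreover have "s \<le> 1"
    using assms(3) \<open>y \<le> 1\<close> by simp
  ultimately obtain t where "s \<le> t" "t \<le> 1" "(\<Sum>i\<in>G. q i powr t) = 1"
    using IVT2'[of "\<lambda>t. \<Sum>i\<in>G. q i powr t" 1 1 s] above below by auto
  then show ?thesis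
    using G(1,2) \<open>G \<noteq> {}\<close> by blast
qed

definition critical_exponent :: "nat set \<Rightarrow> ereal" where
  "critical_exponent V = Sup {ereal x | x. (\<Sum>\<^sub>\<infinity>i\<in>V. ennreal (q i powr x)) \<ge> 1}"

lemma critical_exponent_nonneg:
  assumes "V \<noteq> {}"
  shows "0 \<le> critical_exponent V"
proof -
  obtain i where "i \<in> V"
    using assms by blast
  then have "1 \<le> (\<Sum>\<^sub>\<infinity>i\<in>V. ennreal (q i powr 0))"
    using q_pos sum_le_infsum_ennreal[of "{i}" V "\<lambda>i. ennreal (q i powr 0)"]
    by (simp add: less_imp_neq[symmetric])
  then have "ereal 0 \<in> {ereal x | x. (\<Sum>\<^sub>\<infinity>i\<in>V. ennreal (q i powr x)) \<ge> 1}"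
    by blast
  then show ?thesis
    unfolding critical_exponent_def zero_ereal_def by (rule Sup_upper)
qed

lemma hausdorff_dim_gls_set_le:
  assumes "infinite V"
  shows "hausdorff_dim (gls_set q a V) \<le> critical_exponent V"
proof (rule dense_ge)
  fix z assume z: "critical_exponent V < z"
  show "hausdorff_dim (gls_set q a V) \<le> z"
  proof (cases z)
    case (real t)
    have "ereal t \<notin> {ereal x | x. (\<Sum>\<^sub>\<infinity>i\<in>V. ennreal (q i powr x)) \<ge> 1}"
    proof
      assume "ereal t \<in> {ereal x | x. (\<Sum>\<^sub>\<infinity>i\<in>V. ennreal (q i powr x)) \<ge> 1}"
      then have "ereal t \<le> critical_exponent V"
        unfolding critical_exponent_def by (rule Sup_upper)
      then show False
        using z real by simp
    qed
    then have "(\<Sum>\<^sub>\<infinity>i\<in>V. ennreal (q i powr t)) < 1"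
      by (auto simp: not_le)
    moreover have "0 \<le> critical_exponent V"
      using assms by (intro critical_exponent_nonneg) auto
    then have "0 \<le> z"
      using less_imp_le[OF z] by (rule order.trans)
    then have "0 \<le> t"
      using real by simp
    ultimately show ?thesis
      using real hausdorff_dim_le hausdorff_measure_gls_set_eq_0[OF assms] by simp
  qed (use z in auto)
qed

lemma ereal_le_hausdorff_dim_gls_set:
  assumes "1 \<le> (\<Sum>\<^sub>\<infinity>i\<in>V. ennreal (q i powr y))" "0 < s" "s < y"
  shows "ereal s \<le> hausdorff_dim (gls_set q a V)"
proof -
  obtain G t where G: "finite G" "G \<subseteq> V" "G \<noteq> {}" "s \<le> t" "t \<le> 1"
    and sum_1: "(\<Sum>i\<in>G. q i powr t) = 1"
    using exists_finite_powr_sum_eq_1[OF assms] by blast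
  have "0 < hausdorff_pre t (1/2) (gls_set q a G)"
    using assms(2) G sum_1 by (intro hausdorff_pre_gls_set_pos) auto
  also have "\<dots> \<le> hausdorff_pre t (1/2) (gls_set q a V)"
    using G(2) unfolding gls_set_def by (intro hausdorff_pre_mono) blast
  finally have "ereal t \<le> hausdorff_dim (gls_set q a V)"
    by (intro hausdorff_dim_ge) auto
  then show ?thesis
    by (rule order_trans[rotated]) (simp add: G(4))
qed

lemma critical_exponent_le_hausdorff_dim: "critical_exponent V \<le> hausdorff_dim (gls_set q a V)"
  unfolding critical_exponent_def
proof (rule Sup_least)
  fix z assume "z \<in> {ereal x | x. (\<Sum>\<^sub>\<infinity>i\<in>V. ennreal (q i powr x)) \<ge> 1}"
  then obtain y where z: "z = ereal y" and y: "1 \<le> (\<Sum>\<^sub>\<infinity>i\<in>V. ennreal (q i powr y))"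
    by blast
  show "z \<le> hausdorff_dim (gls_set q a V)"
  proof (cases "0 < y")
    case True
    show ?thesis
      unfolding z
    proof (rule dense_le_bounded[of 0])
      fix w assume "0 < w" "w < ereal y"
      then have "\<exists>s. w = ereal s \<and> 0 < s \<and> s < y"
        by (cases w) auto
      then obtain s where "w = ereal s" "0 < s" "s < y"
        by blast
      then show "w \<le> hausdorff_dim (gls_set q a V)"
        using ereal_le_hausdorff_dim_gls_set[OF y, of s] by simp
    qed (use True in simp)
  next
    case False
    then have "z \<le> 0"
      by (simp add: z zero_ereal_def)
    then show ?thesis
      using hausdorff_dim_nonneg by (rule order_trans)
  qed
qed

theorem hausdorff_dim_gls_set:
  "infinite V \<Longrightarrow> hausdorff_dim (gls_set q a V) = critical_exponent V"
  using hausdorff_dim_gls_set_le critical_exponent_le_hausdorff_dim by (rule antisym)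

end

theorem theorem3:
  fixes q a :: "nat \<Rightarrow> real" and V :: "nat set"
  assumes q_pos: "\<And>i. q i > 0"
    and q_sum: "q sums 1"
    and intervals: "\<And>i. 0 \<le> a i \<and> a i + q i \<le> 1"
    and disj: "\<And>i j. i \<noteq> j \<Longrightarrow> {a i<..<a i + q i} \<inter> {a j<..<a j + q j} = {}"
    and V_inf: "infinite V"
  shows "hausdorff_dim (gls_set q a V) =
         Sup {ereal x | x. (\<Sum>\<^sub>\<infinity>i\<in>V. ennreal (q i powr x)) \<ge> 1}"
proof -
  interpret gls_system q a
    using q_pos q_sum intervals disj by unfold_locales
  show ?thesis
    using hausdorff_dim_gls_set[OF V_inf] by (simp add: critical_exponent_def)
qed

end
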